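(* Let $B$ be a Noetherian ring of dimension $d$, let $(b_1,\ldots,b_n)\in\operatorname{Um}_n(B)$ with $n\ge2$, and let $y\in B$ satisfy $Bb_1+By=B$. Then for any finite family of prime ideals $\nu_1,\ldots,\nu_p\subset B$ there exist an element $b\in Bb_2+\cdots+Bb_n$ and an infinite sequence of natural numbers $c_1<c_2<\cdots$ such that $b_1+by^{c_j}\notin\nu_i$ for all $i=1,\ldots,p$ and all $j=1,2,\ldots$.
   Context: Rings are commutative with unit. $\operatorname{Um}_n(B)$ is the set of rows $(b_1,\ldots,b_n)\in B^n$ with $Bb_1+\cdots+Bb_n=B$. *)

theory Defs
  imports "HOL-Algebra.Ring_Divisibility"
begin

definition prime_chain :: "('a, 'b) ring_scheme \<Rightarrow> (nat \<Rightarrow> 'a set) \<Rightarrow> nat \<Rightarrow> bool" where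
  "prime_chain R P k \<longleftrightarrow> (\<forall>i\<le>k. primeideal (P i) R) \<and> (\<forall>i<k. P i \<subset> P (Suc i))"

definition krull_dim_eq :: "('a, 'b) ring_scheme \<Rightarrow> nat \<Rightarrow> bool" where
  "krull_dim_eq R d \<longleftrightarrow> (\<exists>P. prime_chain R P d) \<and> \<not> (\<exists>P. prime_chain R P (Suc d))"

definition unimodular_row :: "('a, 'b) ring_scheme \<Rightarrow> nat \<Rightarrow> (nat \<Rightarrow> 'a) \<Rightarrow> bool" where
  "unimodular_row R n b \<longleftrightarrow> b ` {1..n} \<subseteq> carrier R \<and> Idl\<^bsub>R\<^esub> (b ` {1..n}) = carrier R"

end

theory Submission
  imports Defs
begin

text \<open>Pass to the maximal members of the finite family of
  primes; by prime avoidance pick bb in the ideal generated by b 2, ..., b n lying outside exactly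
  those maximal primes that contain b 1 (these cannot contain that ideal, the row being
  unimodular). If such a prime contains b 1, it misses y by comaximality, hence misses bb y^c and
  so b 1 + bb y^c; if it does not contain b 1, it contains bb y^c and again misses the sum.\<close>

lemma (in ideal) add_mem_iff_left:
  assumes "x \<in> carrier R" "z \<in> I"
  shows "x \<oplus> z \<in> I \<longleftrightarrow> x \<in> I"
proof
  assume "x \<oplus> z \<in> I"
  moreover have "\<ominus> z \<in> I" using assms(2) by simp
  ultimately have "(x \<oplus> z) \<oplus> \<ominus> z \<in> I" by simp
  moreover have "(x \<oplus> z) \<oplus> \<ominus> z = x"
    using assms Icarr by (metis a_assoc a_inv_closed r_neg r_zero)
  ultimately show "x \<in> I" by simp
next
  assume "x \<in> I"
  then show "x \<oplus> z \<in> I" using assms(2) by simp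
qed

lemma (in primeideal) one_notin: "\<one> \<notin> I"
  using one_imp_carrier I_notcarr by blast

lemma (in primeideal) m_notin:
  assumes "a \<in> carrier R" "b \<in> carrier R" "a \<notin> I" "b \<notin> I"
  shows "a \<otimes> b \<notin> I"
  using I_prime assms by blast

lemma (in primeideal) nat_pow_notin:
  assumes "y \<in> carrier R" "y \<notin> I"
  shows "y [^] (k::nat) \<notin> I"
proof (induction k)
  case 0
  then show ?case using one_notin by simp
next
  case (Suc k)
  then show ?case using m_notin[of "y [^] k" y] assms by simp
qed

lemma (in primeideal) genideal_ne_carrier:
  assumes "S \<subseteq> I"
  shows "Idl S \<noteq> carrier R"
  using genideal_minimal[OF is_ideal assms] I_notcarr Icarr by blast

text \<open>The product of elements chosen outside the prime, one from each ideal.\<close>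

lemma (in primeideal) exists_in_all_notin:
  assumes "finite G" "\<forall>\<mu>\<in>G. ideal \<mu> R \<and> \<not> \<mu> \<subseteq> I"
  shows "\<exists>t\<in>carrier R. t \<notin> I \<and> (\<forall>\<mu>\<in>G. t \<in> \<mu>)"
  using assms
proof (induction G rule: finite_induct)
  case empty
  then show ?case using one_notin by blast
next
  case (insert m G)
  then obtain t where t: "t \<in> carrier R" "t \<notin> I" "\<forall>\<mu>\<in>G. t \<in> \<mu>" by blast
  from insert.prems obtain a where a: "a \<in> m" "a \<notin> I" and m: "ideal m R" by blast
  have ac: "a \<in> carrier R" using ideal.Icarr[OF m a(1)] .
  have "a \<otimes> t \<in> m" using ideal.I_r_closed[OF m a(1) t(1)] .
  moreover have "\<forall>\<mu>\<in>G. a \<otimes> t \<in> \<mu>" using insert.prems t(3) ac by (meson ideal.I_l_closed insertCI)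
  moreover have "a \<otimes> t \<notin> I" using m_notin ac t a(2) by blast
  ultimately show ?case using ac t(1) by blast
qed

text \<open>Induction on A: the new element is s + e t, with s the previous one, e in J outside the
  new prime, and t in all other primes of F but outside the new one.\<close>

lemma (in cring) prime_avoidance_antichain:
  assumes "finite F" "\<forall>\<mu>\<in>F. primeideal \<mu> R"
    and "\<forall>\<mu>\<in>F. \<forall>\<mu>'\<in>F. \<mu> \<subseteq> \<mu>' \<longrightarrow> \<mu> = \<mu>'"
    and "A \<subseteq> F" "ideal J R" "\<forall>\<mu>\<in>A. \<not> J \<subseteq> \<mu>"
  shows "\<exists>s\<in>J. (\<forall>\<mu>\<in>A. s \<notin> \<mu>) \<and> (\<forall>\<mu>\<in>F - A. s \<in> \<mu>)"
proof -
  interpret J: ideal J R by fact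
  have "finite A" using assms(1,4) finite_subset by blast
  then show ?thesis
    using assms(4,6)
  proof (induction A rule: finite_induct)
    case empty
    have "\<forall>\<mu>\<in>F. \<zero> \<in> \<mu>" using assms(2) by (meson additive_subgroup.zero_closed ideal_def primeideal_def)
    then show ?case by auto
  next
    case (insert \<nu> A)
    then obtain s where s: "s \<in> J" "\<forall>\<mu>\<in>A. s \<notin> \<mu>" "\<forall>\<mu>\<in>F - A. s \<in> \<mu>" by auto
    have \<nu>: "\<nu> \<in> F" "\<nu> \<notin> A" using insert by auto
    then interpret \<nu>: primeideal \<nu> R using assms(2) by blast
    obtain e where e: "e \<in> J" "e \<notin> \<nu>" using insert.prems by auto
    have "\<forall>\<mu>\<in>F - {\<nu>}. ideal \<mu> R \<and> \<not> \<mu> \<subseteq> \<nu>"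
      using assms(2,3) \<nu>(1) primeideal.axioms(1) by blast
    then obtain t where t: "t \<in> carrier R" "t \<notin> \<nu>" "\<forall>\<mu>\<in>F - {\<nu>}. t \<in> \<mu>"
      using \<nu>.exists_in_all_notin assms(1) by (meson finite_Diff)
    have ec: "e \<in> carrier R" and sc: "s \<in> carrier R" using e s J.Icarr by auto
    have et_other: "e \<otimes> t \<in> \<mu>" if "\<mu> \<in> F - {\<nu>}" for \<mu>
      using t(3) that ideal.I_l_closed[OF _ _ ec] assms(2) primeideal.axioms(1) by blast
    have "s \<oplus> e \<otimes> t \<notin> \<nu>"
    proof -
      have "e \<otimes> t \<notin> \<nu>" using \<nu>.m_notin ec t e by blast
      moreover have "s \<in> \<nu>" using s(3) \<nu> by blast
      ultimately show ?thesis using \<nu>.add_mem_iff_left[of "e \<otimes> t" s] a_comm ec t(1) sc by auto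
    qed
    moreover have "s \<oplus> e \<otimes> t \<in> \<mu> \<longleftrightarrow> s \<in> \<mu>" if "\<mu> \<in> F - {\<nu>}" for \<mu>
      using ideal.add_mem_iff_left[OF _ sc et_other[OF that]] that assms(2) primeideal.axioms(1)
      by blast
    moreover have "s \<oplus> e \<otimes> t \<in> J" using s(1) J.I_r_closed[OF e(1) t(1)] by (rule J.a_closed)
    ultimately show ?case using s \<nu> insert.prems(1) by (intro bexI[of _ "s \<oplus> e \<otimes> t"]) auto
  qed
qed

lemma (in cring) translates_avoiding_primes:
  assumes "finite P" "\<forall>\<mu>\<in>P. primeideal \<mu> R" "a \<in> carrier R" "U \<subseteq> carrier R" "ideal J R"
    and "\<forall>\<mu>\<in>P. a \<in> \<mu> \<longrightarrow> \<not> J \<subseteq> \<mu> \<and> U \<inter> \<mu> = {}"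
  shows "\<exists>s\<in>J. \<forall>u\<in>U. \<forall>\<mu>\<in>P. a \<oplus> s \<otimes> u \<notin> \<mu>"
proof -
  have excluded: "\<not> J \<subseteq> \<mu> \<and> U \<inter> \<mu> = {}" if "\<mu> \<in> P" "a \<in> \<mu>" for \<mu>
    using mp[OF bspec[OF assms(6) that(1)] that(2)] .
  define M where "M = {\<mu>\<in>P. \<forall>\<mu>'\<in>P. \<mu> \<subseteq> \<mu>' \<longrightarrow> \<mu> = \<mu>'}"
  define A where "A = {\<mu>\<in>M. a \<in> \<mu>}"
  have "finite M" "\<forall>\<mu>\<in>M. primeideal \<mu> R" "\<forall>\<mu>\<in>M. \<forall>\<mu>'\<in>M. \<mu> \<subseteq> \<mu>' \<longrightarrow> \<mu> = \<mu>'" "A \<subseteq> M"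
    using assms(1,2) unfolding M_def A_def by auto
  moreover have "\<forall>\<mu>\<in>A. \<not> J \<subseteq> \<mu>"
  proof
    fix \<mu> assume "\<mu> \<in> A"
    then have "\<mu> \<in> P" "a \<in> \<mu>" unfolding A_def M_def by auto
    then show "\<not> J \<subseteq> \<mu>" using excluded by blast
  qed
  ultimately have "\<exists>s\<in>J. (\<forall>\<mu>\<in>A. s \<notin> \<mu>) \<and> (\<forall>\<mu>\<in>M - A. s \<in> \<mu>)"
    by (rule prime_avoidance_antichain[OF _ _ _ _ assms(5)])
  then obtain s where s: "s \<in> J" "\<forall>\<mu>\<in>A. s \<notin> \<mu>" "\<forall>\<mu>\<in>M - A. s \<in> \<mu>" by blast
  have sc: "s \<in> carrier R" using ideal.Icarr[OF assms(5) s(1)] .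
  have avoid_maximal: "a \<oplus> s \<otimes> u \<notin> m" if "m \<in> M" "u \<in> U" for m u
  proof -
    interpret m: primeideal m R using that(1) assms(2) unfolding M_def by blast
    have uc: "u \<in> carrier R" using that(2) assms(4) by blast
    show ?thesis
    proof (cases "a \<in> m")
      case True
      have "m \<in> P" using that(1) unfolding M_def by blast
      then have "u \<notin> m" using excluded[of m] that(2) True by blast
      moreover have "s \<notin> m" using s(2) that(1) True unfolding A_def by blast
      ultimately have "s \<otimes> u \<notin> m" using m.m_notin sc uc by blast
      then show ?thesis using m.add_mem_iff_left[of "s \<otimes> u" a] a_comm True assms(3) sc uc by auto
    next
      case False
      have "s \<otimes> u \<in> m" using s(3) that(1) False m.I_r_closed uc unfolding A_def by blast
      then show ?thesis using m.add_mem_iff_left[OF assms(3)] False by blast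
    qed
  qed
  have "a \<oplus> s \<otimes> u \<notin> \<mu>" if \<mu>: "\<mu> \<in> P" and u: "u \<in> U" for \<mu> u
  proof -
    obtain m where "m \<in> P" "\<mu> \<subseteq> m" "\<forall>x\<in>P. m \<subseteq> x \<longrightarrow> m = x"
      using finite_has_maximal2[OF assms(1) \<mu>] by blast
    then show ?thesis using avoid_maximal[of m u] u unfolding M_def by blast
  qed
  then show ?thesis using s(1) by blast
qed

lemma unimodular_row_tail_not_subset:
  fixes R (structure)
  assumes "unimodular_row R n b" "primeideal \<mu> R" "b 1 \<in> \<mu>"
  shows "\<not> Idl\<^bsub>R\<^esub> (b ` {2..n}) \<subseteq> \<mu>"
proof
  interpret primeideal \<mu> R by fact
  have row: "b ` {1..n} \<subseteq> carrier R" "Idl (b ` {1..n}) = carrier R"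
    using assms(1) unfolding unimodular_row_def by simp_all
  then have tail: "b ` {2..n} \<subseteq> carrier R" by (auto simp: subset_iff)
  assume "Idl (b ` {2..n}) \<subseteq> \<mu>"
  then have "b ` {2..n} \<subseteq> \<mu>" using genideal_self[OF tail] by (rule order_trans[rotated])
  moreover have "{1..n} \<subseteq> insert 1 {2..n}" by auto
  ultimately have "b ` {1..n} \<subseteq> \<mu>" using assms(3) by (auto simp: subset_iff)
  then show False using genideal_ne_carrier row(2) by simp
qed

theorem corollary7p2:
  fixes B :: "('a, 'm) ring_scheme" and d n p :: nat
    and b :: "nat \<Rightarrow> 'a" and y :: 'a and \<nu> :: "nat \<Rightarrow> 'a set"
  assumes "cring B" and "noetherian_ring B" and "krull_dim_eq B d"
    and "n \<ge> 2" and "unimodular_row B n b"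
    and "y \<in> carrier B" and "Idl\<^bsub>B\<^esub> {b 1, y} = carrier B"
    and "\<forall>i\<in>{1..p}. primeideal (\<nu> i) B"
  shows "\<exists>bb \<in> Idl\<^bsub>B\<^esub> (b ` {2..n}). \<exists>c :: nat \<Rightarrow> nat. strict_mono c \<and>
           (\<forall>i\<in>{1..p}. \<forall>j. b 1 \<oplus>\<^bsub>B\<^esub> bb \<otimes>\<^bsub>B\<^esub> (y [^]\<^bsub>B\<^esub> c j) \<notin> \<nu> i)"
proof -
  interpret cring B by fact
  define J where "J = Idl\<^bsub>B\<^esub> (b ` {2..n})"
  define U where "U = range (\<lambda>k::nat. y [^]\<^bsub>B\<^esub> k)"
  have row: "b ` {1..n} \<subseteq> carrier B" using assms(5) unfolding unimodular_row_def by blast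
  have "b 1 \<in> carrier B" "b ` {2..n} \<subseteq> carrier B" "U \<subseteq> carrier B"
    using row assms(4,6) unfolding U_def by auto
  moreover from this(2) have "ideal J B" unfolding J_def by (rule genideal_ideal)
  moreover have "\<not> J \<subseteq> \<mu> \<and> U \<inter> \<mu> = {}" if "primeideal \<mu> B" "b 1 \<in> \<mu>" for \<mu>
  proof -
    have "y \<notin> \<mu>"
      using primeideal.genideal_ne_carrier[OF that(1), of "{b 1, y}"] assms(7) that(2) by blast
    then show ?thesis using unimodular_row_tail_not_subset[OF assms(5) that]
        primeideal.nat_pow_notin[OF that(1) assms(6)] unfolding J_def U_def by blast
  qed
  ultimately obtain bb where "bb \<in> J" "\<forall>u\<in>U. \<forall>\<mu>\<in>\<nu> ` {1..p}. b 1 \<oplus>\<^bsub>B\<^esub> bb \<otimes>\<^bsub>B\<^esub> u \<notin> \<mu>"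
    using translates_avoiding_primes[of "\<nu> ` {1..p}" "b 1" U J] assms(8) by auto
  moreover have "strict_mono (id :: nat \<Rightarrow> nat)" by (simp add: strict_mono_def)
  ultimately show ?thesis unfolding J_def U_def by auto
qed

end
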